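(* Fix $m,n,s\in\mathbb{N}$ with $s\le m\le n$. Suppose that there exists an $m$-by-$n$ matrix $A$ with integer entries such that any $s$ of the columns of $A$ are linearly independent. Then there also exists an $m$-by-$n$ matrix $B$ with integer entries such that any $s$ of the columns of $B$ are linearly independent, $B$ has rank $m$, and $$\|B\|_{\ell_2^n\to\ell_2^m}\le\sqrt{1+\|A\|_{\ell_2^n\to\ell_2^m}^2}.$$
   Context: $\|\cdot\|_{\ell_2^n\to\ell_2^m}$ denotes the operator norm from $\mathbb{R}^n$ to $\mathbb{R}^m$, both equipped with the Euclidean norm. *)

theory Defs
  imports "HOL-Analysis.Analysis"
begin

definition int_matrix :: "real^'n^'m \<Rightarrow> bool" where
  "int_matrix A \<longleftrightarrow> (\<forall>i j. A $ i $ j \<in> \<int>)"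

definition cols_indep :: "nat \<Rightarrow> real^'n^'m \<Rightarrow> bool" where
  "cols_indep s A \<longleftrightarrow>
     (\<forall>S :: 'n set. card S = s \<longrightarrow>
        inj_on (\<lambda>j. column j A) S \<and> independent ((\<lambda>j. column j A) ` S))"

end

theory Submission
  imports Defs
begin

(* Keep a maximal linearly independent set of rows of A, indexed by R, and extend it to a basis
   of R^n by unit vectors; B is A with every row outside R replaced by a different one of these
   unit vectors.  Then B is integral with independent rows, hence of rank m.  Every row of A lies
   in the row space of B, so ker B \<subseteq> ker A and column independence passes from A to B.
   Finally |Bx|^2 \<le> |Ax|^2 + |x|^2, as the unit rows read off distinct coordinates of x. *)

lemma matrix_vector_mult_eq_0_if_rows_in_span:
  fixes A :: "real^'n^'m" and M :: "real^'n^'k"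
  assumes "rows A \<subseteq> span (rows M)" and "M *v x = 0"
  shows "A *v x = 0"
proof -
  have "orthogonal x (A $ i)" for i
    using orthogonal_nullspace_rowspace[OF assms(2)] assms(1) by (auto simp: rows_def row_def)
  then show ?thesis
    by (simp add: vec_eq_iff matrix_vector_mul_component orthogonal_def inner_commute)
qed

lemma cols_indep_iff_inj_on_span_axes:
  fixes A :: "real^'n^'m"
  shows "cols_indep s A \<longleftrightarrow> (\<forall>S. card S = s \<longrightarrow> inj_on ((*v) A) (span ((\<lambda>j. axis j 1) ` S)))"
proof -
  let ?e = "\<lambda>j. axis j (1::real)" and ?f = "(*v) A"
  have "inj_on (\<lambda>j. column j A) S \<and> independent ((\<lambda>j. column j A) ` S) \<longleftrightarrow>
      inj_on ?f (span (?e ` S))" for S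
  proof -
    have cols: "(\<lambda>j. column j A) = ?f \<circ> ?e"
      by (simp add: fun_eq_iff matrix_vector_mult_basis)
    have "inj_on ?e S" by (auto intro: inj_onI simp: axis_eq_axis)
    then have "inj_on (\<lambda>j. column j A) S \<longleftrightarrow> inj_on ?f (?e ` S)"
      by (simp add: cols comp_inj_on_iff)
    moreover have "independent (?e ` S)"
      by (rule independent_mono[OF independent_Basis]) auto
    ultimately show ?thesis
      using linear_inj_on_span_iff_independent_image[OF matrix_vector_mul_linear]
        linear_independent_injective_image[OF matrix_vector_mul_linear]
        inj_on_subset[OF _ span_superset]
      by (metis cols image_comp)
  qed
  then show ?thesis by (simp add: cols_indep_def)
qed

lemma cols_indep_if_kernel_subset:
  fixes A :: "real^'n^'m" and M :: "real^'n^'k"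
  assumes "cols_indep s A" and "\<And>x. M *v x = 0 \<Longrightarrow> A *v x = 0"
  shows "cols_indep s M"
  using assms unfolding cols_indep_iff_inj_on_span_axes
  by (simp add: linear_inj_on_iff_eq_0[OF matrix_vector_mul_linear] subspace_span)

lemma onorm_le_sqrt_one_plus_onorm_sq:
  fixes f :: "'a::{real_normed_vector, perfect_space} \<Rightarrow> 'b::real_normed_vector"
    and h :: "'a \<Rightarrow> 'c::real_normed_vector"
  assumes "bounded_linear h" and "\<And>x. (norm (f x))\<^sup>2 \<le> (norm x)\<^sup>2 + (norm (h x))\<^sup>2"
  shows "onorm f \<le> sqrt (1 + (onorm h)\<^sup>2)"
proof (rule onorm_le)
  fix x
  have "norm (h x) \<le> onorm h * norm x"
    using assms(1) by (rule onorm)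
  then have "(norm (h x))\<^sup>2 \<le> (onorm h * norm x)\<^sup>2"
    by (simp add: power_mono)
  with assms(2)[of x] have "(norm (f x))\<^sup>2 \<le> (norm x)\<^sup>2 + (onorm h * norm x)\<^sup>2"
    by linarith
  also have "\<dots> = (sqrt (1 + (onorm h)\<^sup>2) * norm x)\<^sup>2"
    by (simp add: power_mult_distrib algebra_simps)
  finally show "norm (f x) \<le> sqrt (1 + (onorm h)\<^sup>2) * norm x"
    by (rule power2_le_imp_le) simp
qed

definition axis_completion :: "'m set \<Rightarrow> ('m \<Rightarrow> 'n) \<Rightarrow> real^'n^'m \<Rightarrow> real^'n^'m" where
  "axis_completion R g A = (\<chi> i. if i \<in> R then A $ i else axis (g i) 1)"

lemma int_matrix_axis_completion:
  assumes "int_matrix A"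
  shows "int_matrix (axis_completion R g A)"
  using assms by (auto simp: int_matrix_def axis_completion_def axis_def)

lemma axis_completion_mult_component:
  "(axis_completion R g A *v x) $ i = (if i \<in> R then (A *v x) $ i else x $ g i)"
  by (simp add: axis_completion_def matrix_vector_mul_component inner_axis')

lemma norm_axis_completion_mult_sq_le:
  fixes A :: "real^'n^'m"
  assumes "inj_on g (- R)"
  shows "(norm (axis_completion R g A *v x))\<^sup>2 \<le> (norm x)\<^sup>2 + (norm (A *v x))\<^sup>2"
proof -
  have norm_sq: "(norm v)\<^sup>2 = (\<Sum>i\<in>UNIV. (v $ i)\<^sup>2)" for v :: "real^'k"
    by (simp add: norm_vec_def L2_set_def sum_nonneg)
  have "(norm (axis_completion R g A *v x))\<^sup>2 = (\<Sum>i\<in>- R. (x $ g i)\<^sup>2) + (\<Sum>i\<in>R. ((A *v x) $ i)\<^sup>2)"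
    unfolding norm_sq axis_completion_mult_component
    by (simp add: if_distrib[where f="\<lambda>t. t\<^sup>2"] sum.If_cases add.commute)
  also have "(\<Sum>i\<in>- R. (x $ g i)\<^sup>2) = (\<Sum>j\<in>g ` (- R). (x $ j)\<^sup>2)"
    by (simp add: sum.reindex[OF assms])
  also have "\<dots> \<le> (\<Sum>j\<in>UNIV. (x $ j)\<^sup>2)"
    by (rule sum_mono2) auto
  also have "(\<Sum>i\<in>R. ((A *v x) $ i)\<^sup>2) \<le> (\<Sum>i\<in>UNIV. ((A *v x) $ i)\<^sup>2)"
    by (rule sum_mono2) auto
  finally show ?thesis
    by (simp add: norm_sq)
qed

lemma independent_extend_by_Basis:
  fixes B :: "'a::euclidean_space set"
  assumes "independent B"
  obtains E where "E \<subseteq> Basis" "B \<inter> E = {}" "independent (B \<union> E)" "card E = DIM('a) - card B"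
proof -
  obtain B' where B': "B \<subseteq> B'" "B' \<subseteq> B \<union> Basis" "independent B'" "B \<union> Basis \<subseteq> span B'"
    using maximal_independent_subset_extend[of B "B \<union> Basis"] assms by blast
  have "Basis \<subseteq> span B'"
    using B'(4) by blast
  then have "UNIV \<subseteq> span B'"
    using span_minimal[of Basis "span B'"] by simp
  then have "card B' = DIM('a)"
    using basis_card_eq_dim[OF subset_UNIV _ B'(3)] by simp
  moreover have "finite B'"
    using B'(3) independent_bound by blast
  ultimately have "card (B' - B) = DIM('a) - card B"
    using B'(1) by (simp add: card_Diff_subset finite_subset)
  moreover have "B' - B \<subseteq> Basis" and "B \<union> (B' - B) = B'"
    using B'(1,2) by auto
  ultimately show thesis
    using that[of "B' - B"] B'(3) by auto
qed

lemma rank_eq_CARD_if_rows_independent: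
  fixes M :: "real^'n^'m"
  assumes "inj (($) M)" and "independent (rows M)"
  shows "rank M = CARD('m)"
proof -
  have "rows M = range (($) M)"
    by (auto simp: rows_def row_def)
  then show ?thesis
    using assms by (simp add: row_rank_def dim_eq_card_independent card_image)
qed

lemma rank_axis_completion:
  fixes A :: "real^'n^'m"
  assumes "inj_on (($) A) R" and "inj_on g (- R)"
    and "independent (($) A ` R \<union> (\<lambda>i. axis (g i) 1) ` (- R))"
    and "($) A ` R \<inter> (\<lambda>i. axis (g i) 1) ` (- R) = {}"
  shows "rank (axis_completion R g A) = CARD('m)"
proof (rule rank_eq_CARD_if_rows_independent)
  let ?M = "axis_completion R g A"
  have rows_R: "($) ?M ` R = ($) A ` R" and rows_not_R: "($) ?M ` (- R) = (\<lambda>i. axis (g i) 1) ` (- R)"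
    by (auto simp: axis_completion_def)
  have "inj_on (($) ?M) R"
    using assms(1) by (auto simp: inj_on_def axis_completion_def)
  moreover have "inj_on (($) ?M) (- R)"
    using assms(2) by (auto simp: inj_on_def axis_completion_def axis_eq_axis)
  ultimately show "inj (($) ?M)"
    using inj_on_Un[of "($) ?M" R "- R"] assms(4) rows_R rows_not_R by (simp add: Diff_eq)
  have "rows ?M = ($) ?M ` R \<union> ($) ?M ` (- R)"
    by (auto simp: rows_def row_def)
  with assms(3) show "independent (rows ?M)"
    by (simp add: rows_R rows_not_R)
qed

lemma exists_full_rank_axis_completion:
  fixes A :: "real^'n^'m"
  assumes "CARD('m) \<le> CARD('n)"
  obtains R g where "inj_on g (- R)" "rows A \<subseteq> span (rows (axis_completion R g A))"
    "rank (axis_completion R g A) = CARD('m)"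
proof -
  let ?e = "\<lambda>j. axis j (1::real)"
  obtain B where B: "B \<subseteq> rows A" "independent B" "rows A \<subseteq> span B"
    using maximal_independent_subset[of "rows A"] by blast
  have "rows A = range (($) A)"
    by (auto simp: rows_def row_def)
  then obtain R where R: "inj_on (($) A) R" "B = ($) A ` R"
    using B(1) subset_image_inj[of B "($) A" UNIV] by auto
  obtain E where E: "E \<subseteq> Basis" "B \<inter> E = {}" "independent (B \<union> E)" "card E = CARD('n) - card B"
    using independent_extend_by_Basis[OF B(2)] by auto
  have "(Basis :: (real^'n) set) = range ?e"
    by (auto simp: Basis_vec_def)
  then obtain J where J: "inj_on ?e J" "E = ?e ` J"
    using E(1) subset_image_inj[of E ?e UNIV] by auto
  have "card (- R) = CARD('m) - card R"
    by (simp add: Compl_eq_Diff_UNIV card_Diff_subset)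
  then have "card (- R) \<le> card J"
    using assms E(4) J card_image[OF R(1)] card_image[OF J(1)] R(2) by simp
  then obtain g where g: "inj_on g (- R)" "g ` (- R) \<subseteq> J"
    using card_le_inj[of "- R" J] by auto
  let ?M = "axis_completion R g A"
  have unit_rows: "(\<lambda>i. axis (g i) 1) ` (- R) \<subseteq> E"
    using g(2) J(2) by auto
  have "rank ?M = CARD('m)"
  proof (rule rank_axis_completion[OF R(1) g(1)])
    show "independent (($) A ` R \<union> (\<lambda>i. axis (g i) 1) ` (- R))"
      using unit_rows R(2) by (intro independent_mono[OF E(3)]) blast
    show "($) A ` R \<inter> (\<lambda>i. axis (g i) 1) ` (- R) = {}"
      using unit_rows R(2) E(2) by blast
  qed
  moreover have "span B \<subseteq> span (rows ?M)"
    using R(2) by (intro span_mono) (auto simp: rows_def row_def axis_completion_def)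
  with B(3) have "rows A \<subseteq> span (rows ?M)"
    by (rule order.trans)
  ultimately show thesis
    using g(1) that by blast
qed

theorem mainTheorem6:
  fixes A :: "real^'n^'m" and s :: nat
  assumes "s \<le> CARD('m)" and "CARD('m) \<le> CARD('n)"
    and "int_matrix A" and "cols_indep s A"
  shows "\<exists>B :: real^'n^'m. int_matrix B \<and> cols_indep s B \<and> rank B = CARD('m) \<and>
           onorm (\<lambda>x. B *v x) \<le> sqrt (1 + (onorm (\<lambda>x. A *v x))\<^sup>2)"
proof -
  obtain R g where g: "inj_on g (- R)"
    and rows_A: "rows A \<subseteq> span (rows (axis_completion R g A))"
    and rank_B: "rank (axis_completion R g A) = CARD('m)"
    using exists_full_rank_axis_completion[OF assms(2)] by blast
  let ?B = "axis_completion R g A"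
  have int_B: "int_matrix ?B"
    using assms(3) by (rule int_matrix_axis_completion)
  have cols_B: "cols_indep s ?B"
    using assms(4) matrix_vector_mult_eq_0_if_rows_in_span[OF rows_A]
    by (rule cols_indep_if_kernel_subset)
  have norm_B: "onorm (\<lambda>x. ?B *v x) \<le> sqrt (1 + (onorm (\<lambda>x. A *v x))\<^sup>2)"
    by (rule onorm_le_sqrt_one_plus_onorm_sq[OF matrix_vector_mul_bounded_linear
          norm_axis_completion_mult_sq_le[OF g]])
  show ?thesis
    by (rule exI[of _ ?B]) (intro conjI int_B cols_B rank_B norm_B)
qed

end
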